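(* Let $1\le p\le 2$, $m\geq1$ and $M\geq2$. There is a constant $S_{m,M,p}\geq1$ such that for all $N\in\mathbb{N}$ and every array $(a_{n_1\ldots n_m})_{n_1,\ldots,n_m=1}^N$ of complex numbers, $$\Big(\sum_{n_1,\ldots,n_m=1}^N|a_{n_1\ldots n_m}|^2\Big)^{1/2}\le S_{m,M,p}\cdot E_{m,M,p}\big((a_{n_1\ldots n_m})_{n_1,\ldots,n_m=1}^N\big).$$ Moreover, for $M\ge3$ the (optimal) constant satisfies $S_{m,M,p}\le C\cdot r_M^{-m}$, where $C$ is the constant defined in the context.
   Context: $\Omega_M=\{2j\pi/M: j=0,\ldots,M-1\}$ and $$E_{m,M,p}\big((a_{n_1\ldots n_m})\big)=\Big(\Big(\frac1M\Big)^{Nm}\sum_{(t^{(1)},\ldots,t^{(m)})\in(\Omega_M^N)^m}\Big|\sum_{n_1,\ldots,n_m=1}^N a_{n_1\ldots n_m}e^{it^{(1)}_{n_1}}\cdots e^{it^{(m)}_{n_m}}\Big|^p\Big)^{1/p}.$$ $r_M=\left(\frac12+\frac12\cos\left(\frac{2\pi}{M}\right)\right)^{1/2}$. Let $p^*$ be the conjugate exponent of $p$ ($p^*=\infty$ if $p=1$), $X_{p^*}=\ell_{p^*}(\mathbb{C})$ if $p^*<\infty$ and $X_\infty=c_0(\mathbb{C})$, and $(e_k)$ the canonical unit vectors. $C=C^{\sigma_{m+1},(p^*,\infty,\ldots,\infty)\mathbb{C}}_{(2,\ldots,2,p)}$ is the smallest constant such that for every continuous $(m+1)$-linear form $T:X_{p^*}\times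 c_0\times\cdots\times c_0\to\mathbb{C}$, $$\Big(\sum_{i_2,\ldots,i_{m+1}=1}^\infty\Big(\sum_{i_1=1}^\infty|T(e_{i_1},\ldots,e_{i_{m+1}})|^p\Big)^{2/p}\Big)^{1/2}\le C\|T\|,$$ with $\|T\|$ the usual sup norm over products of unit balls. *)

theory Defs
  imports "HOL-Analysis.Analysis"
begin

text \<open>Multi-indices (n_1,...,n_m) with 1 <= n_k <= N are encoded 0-based as lists of
  length m with entries in {..<N}.\<close>
definition idx :: "nat \<Rightarrow> nat \<Rightarrow> nat list set" where
  "idx m N = {ns. length ns = m \<and> set ns \<subseteq> {..<N}}"

text \<open>A point (t^(1),...,t^(m)) of (Omega_M^N)^m is encoded by t :: nat*nat => nat with
  t^(k+1)_(n+1) = 2 pi t(k,n) / M, t(k,n) in {..<M}.\<close>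
definition E_MMp :: "nat \<Rightarrow> nat \<Rightarrow> real \<Rightarrow> nat \<Rightarrow> (nat list \<Rightarrow> complex) \<Rightarrow> real" where
  "E_MMp m M p N a =
     ((1 / real M) ^ (N * m) *
      (\<Sum>t \<in> PiE ({..<m} \<times> {..<N}) (\<lambda>_. {..<M}).
          cmod (\<Sum>ns \<in> idx m N. a ns * (\<Prod>k<m. cis (2 * pi * real (t (k, ns ! k)) / real M))) powr p))
     powr (1 / p)"

definition l2norm_arr :: "nat \<Rightarrow> nat \<Rightarrow> (nat list \<Rightarrow> complex) \<Rightarrow> real" where
  "l2norm_arr m N a = sqrt (\<Sum>ns \<in> idx m N. (cmod (a ns))\<^sup>2)"

definition r_M :: "nat \<Rightarrow> real" where
  "r_M M = (1/2 + 1/2 * cos (2 * pi / real M)) powr (1/2)"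

definition c0_mem :: "(nat \<Rightarrow> complex) \<Rightarrow> bool" where
  "c0_mem x \<longleftrightarrow> x \<longlonglongrightarrow> 0"

definition sup_norm :: "(nat \<Rightarrow> complex) \<Rightarrow> real" where
  "sup_norm x = Sup (range (\<lambda>i. cmod (x i)))"

definition conj_exp :: "real \<Rightarrow> real" where
  "conj_exp p = p / (p - 1)"

definition X_mem :: "real \<Rightarrow> (nat \<Rightarrow> complex) \<Rightarrow> bool" where
  "X_mem p x \<longleftrightarrow> (if p = 1 then c0_mem x else summable (\<lambda>i. cmod (x i) powr conj_exp p))"

definition X_norm :: "real \<Rightarrow> (nat \<Rightarrow> complex) \<Rightarrow> real" where
  "X_norm p x = (if p = 1 then sup_norm x
                 else (\<Sum>i. cmod (x i) powr conj_exp p) powr (1 / conj_exp p))"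

text \<open>An argument tuple (x_1,...,x_{m+1}) is encoded as x :: nat => (nat => complex) with
  slot k (0-based, k <= m); slots beyond m are required to be zero.\<close>
definition in_dom :: "nat \<Rightarrow> real \<Rightarrow> (nat \<Rightarrow> nat \<Rightarrow> complex) \<Rightarrow> bool" where
  "in_dom m p x \<longleftrightarrow> X_mem p (x 0) \<and> (\<forall>k\<in>{1..m}. c0_mem (x k)) \<and> (\<forall>k>m. x k = (\<lambda>_. 0))"

definition in_ball :: "nat \<Rightarrow> real \<Rightarrow> (nat \<Rightarrow> nat \<Rightarrow> complex) \<Rightarrow> bool" where
  "in_ball m p x \<longleftrightarrow> in_dom m p x \<and> X_norm p (x 0) \<le> 1 \<and> (\<forall>k\<in>{1..m}. sup_norm (x k) \<le> 1)"

definition multilinear_form :: "nat \<Rightarrow> real \<Rightarrow> ((nat \<Rightarrow> nat \<Rightarrow> complex) \<Rightarrow> complex) \<Rightarrow> bool" where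
  "multilinear_form m p T \<longleftrightarrow>
     (\<forall>x k y z c. k \<le> m \<longrightarrow> in_dom m p (x(k := y)) \<longrightarrow> in_dom m p (x(k := z)) \<longrightarrow>
        T (x(k := (\<lambda>i. c * y i + z i))) = c * T (x(k := y)) + T (x(k := z)))"

text \<open>Continuity of a multilinear form is equivalent to boundedness on the product of unit balls.\<close>
definition bounded_form :: "nat \<Rightarrow> real \<Rightarrow> ((nat \<Rightarrow> nat \<Rightarrow> complex) \<Rightarrow> complex) \<Rightarrow> bool" where
  "bounded_form m p T \<longleftrightarrow> bdd_above {cmod (T x) | x. in_ball m p x}"

definition form_norm :: "nat \<Rightarrow> real \<Rightarrow> ((nat \<Rightarrow> nat \<Rightarrow> complex) \<Rightarrow> complex) \<Rightarrow> real" where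
  "form_norm m p T = Sup {cmod (T x) | x. in_ball m p x}"

definition unitvec :: "nat \<Rightarrow> nat \<Rightarrow> complex" where
  "unitvec j = (\<lambda>i. if i = j then 1 else 0)"

definition coef :: "nat \<Rightarrow> ((nat \<Rightarrow> nat \<Rightarrow> complex) \<Rightarrow> complex) \<Rightarrow> nat \<Rightarrow> nat list \<Rightarrow> complex" where
  "coef m T j is = T (\<lambda>k. if k = 0 then unitvec j
                          else if k \<le> m then unitvec (is ! (k - 1)) else (\<lambda>_. 0))"

text \<open>c satisfies the mixed (2,...,2,p) inequality defining
  C = C^{sigma_{m+1},(p*,infty,...,infty)}_{(2,...,2,p)}; C is the smallest such c.\<close>
definition C_admissible :: "nat \<Rightarrow> real \<Rightarrow> real \<Rightarrow> bool" where
  "C_admissible m p c \<longleftrightarrow>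
     (\<forall>T. multilinear_form m p T \<and> bounded_form m p T \<longrightarrow>
        (\<forall>is. length is = m \<longrightarrow> (\<lambda>j. cmod (coef m T j is) powr p) summable_on UNIV) \<and>
        (\<lambda>is. (\<Sum>\<^sub>\<infinity>j. cmod (coef m T j is) powr p) powr (2 / p)) summable_on {is. length is = m} \<and>
        sqrt (\<Sum>\<^sub>\<infinity>is\<in>{is. length is = m}. (\<Sum>\<^sub>\<infinity>j. cmod (coef m T j is) powr p) powr (2 / p))
          \<le> c * form_norm m p T)"

end

(*
  Both bounds compare the coefficients a with the m-linear polynomial
  P(z) = sum_n a_n z^(1)_(n_1) ... z^(m)_(n_m) on the grid of M-th roots of unity.

  For independent uniformly distributed M-th roots w_n, the sum X = sum_n b_n w_n satisfies
  E|X|^2 = sum_n |b_n|^2 and E|X|^4 <= 3 (E|X|^2)^2, and these two moments force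
  (E|X|^2)^(1/2) <= 2 E|X|.  Applying this to one variable of P at a time, together with
  Minkowski's inequality in the remaining ones, gives ||a||_2 <= 2^m E|P|, and E|P| is at most
  the L_p average E_{m,M,p}(a).

  For the constant C, enumerate the grid as t_1, ..., t_K (K = M^(Nm)) and consider the
  (m+1)-linear form T(x, y) = sum_j x_j K^(-1/p) P(w^(t_j) y), where w^(t) y multiplies the
  variables entrywise by the roots of unity w^(t).  Its coefficients are K^(-1/p) a_i times
  roots of unity, so the mixed (l_p, l_2) norm in the definition of C equals ||a||_2, and
  admissibility gives ||a||_2 <= c ||T||.  By Hoelder's inequality in x, ||T|| is at most the
  sup over |y| <= 1 of the L_p average of P(w^t y) over the grid.  The disc of radius
  r_M = cos(pi/M) lies in the convex hull of the M-th roots, and the sum over the grid of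
  |P(w^t y)|^p is convex in each entry of y, so after scaling y by r_M it is maximal when every
  entry of y is a root of unity; there the translation invariance of the grid turns it into
  E_{m,M,p}(a)^p.  Hence ||T|| <= r_M^(-m) E_{m,M,p}(a).
*)

theory Submission
  imports Defs "HOL-Number_Theory.Cong"
begin

lemma sum_PiE_insert:
  assumes "x \<notin> S"
  shows "(\<Sum>f\<in>PiE (insert x S) T. g f) = (\<Sum>y\<in>T x. \<Sum>h\<in>PiE S T. g (h(x := y)))"
proof -
  have "(\<Sum>f\<in>PiE (insert x S) T. g f) = (\<Sum>p\<in>T x \<times> PiE S T. g ((\<lambda>(y, h). h(x := y)) p))"
    unfolding PiE_insert_eq by (rule sum.reindex[OF inj_combinator[OF assms], unfolded comp_def])
  also have "\<dots> = (\<Sum>y\<in>T x. \<Sum>h\<in>PiE S T. g (h(x := y)))"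
    by (simp add: sum.cartesian_product split_def)
  finally show ?thesis .
qed

lemma bij_betw_merge_PiE:
  assumes "I \<inter> J = {}"
  shows "bij_betw (merge I J) (PiE I T \<times> PiE J T) (PiE (I \<union> J) T)"
proof (rule bij_betw_byWitness[where f' = "\<lambda>f. (restrict f I, restrict f J)"])
  show "\<forall>uv\<in>PiE I T \<times> PiE J T. (restrict (merge I J uv) I, restrict (merge I J uv) J) = uv"
    using assms by (auto simp only: restrict_merge PiE_restrict mem_Times_iff)
  show "\<forall>f\<in>PiE (I \<union> J) T. merge I J (restrict f I, restrict f J) = f"
  proof (intro ballI ext)
    fix f i assume f: "f \<in> PiE (I \<union> J) T"
    show "merge I J (restrict f I, restrict f J) i = f i"
      using PiE_arb[OF f, of i] by (simp add: merge_def)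
  qed
  show "merge I J ` (PiE I T \<times> PiE J T) \<subseteq> PiE (I \<union> J) T"
    using assms by (auto simp: PiE_def)
  show "(\<lambda>f. (restrict f I, restrict f J)) ` PiE (I \<union> J) T \<subseteq> PiE I T \<times> PiE J T"
    by (auto simp: PiE_iff)
qed

lemma sum_PiE_Un:
  assumes "I \<inter> J = {}"
  shows "(\<Sum>f\<in>PiE (I \<union> J) T. g f) = (\<Sum>u\<in>PiE I T. \<Sum>v\<in>PiE J T. g (merge I J (u, v)))"
  by (simp add: sum.reindex_bij_betw[OF bij_betw_merge_PiE[OF assms], symmetric]
      sum.cartesian_product)

section \<open>Roots of unity\<close>

definition unit_root :: "nat \<Rightarrow> nat \<Rightarrow> complex" where
  "unit_root M j = cis (2 * pi * real j / real M)"

lemma norm_unit_root [simp]: "cmod (unit_root M j) = 1"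
  by (simp add: unit_root_def)

lemma unit_root_add: "unit_root M (i + j) = unit_root M i * unit_root M j"
  by (simp add: unit_root_def cis_mult add_divide_distrib distrib_left)

lemma unit_root_mod:
  assumes "0 < M"
  shows "unit_root M (j mod M) = unit_root M j"
proof -
  have "unit_root M (M * (j div M)) = 1"
    using assms cis_multiple_2pi[of "real (j div M)"] by (simp add: unit_root_def ac_simps)
  then show ?thesis
    by (metis mult.right_neutral mod_mult_div_eq unit_root_add)
qed

lemma sum_unit_roots:
  assumes "2 \<le> M"
  shows "(\<Sum>j<M. unit_root M j) = 0"
proof -
  define z where "z = cis (2 * pi / real M)"
  have pow: "unit_root M j = z ^ j" for j
    unfolding z_def unit_root_def Complex.DeMoivre by (simp add: field_simps)
  have "z \<noteq> 1"
  proof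
    assume "z = 1"
    then have "cos (2 * pi / real M) = 1"
      by (metis cis.sel(1) one_complex.sel(1) z_def)
    then obtain n :: int where n: "2 * pi / real M = real_of_int n * 2 * pi"
      using cos_one_2pi_int by blast
    have "0 < 2 * pi / real M" "2 * pi / real M < 2 * pi"
      using assms by (simp_all add: divide_less_eq)
    with n have "0 < real_of_int n" "real_of_int n < 1"
      by (simp_all add: zero_less_mult_iff)
    then show False
      by simp
  qed
  moreover have "z ^ M = 1"
    using assms by (simp add: z_def Complex.DeMoivre)
  ultimately show ?thesis
    by (simp add: pow sum_gp_strict)
qed

lemma norm_add_sq:
  "(cmod (g + z))\<^sup>2 = (cmod g)\<^sup>2 + (cmod z)\<^sup>2 + 2 * Re (g * cnj z)"
  unfolding cmod_power2 by (simp add: algebra_simps power2_eq_square)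

lemma sum_Re_mult_cnj_unit_roots:
  assumes "2 \<le> M"
  shows "(\<Sum>j<M. Re (w * cnj (unit_root M j))) = 0"
proof -
  have "(\<Sum>j<M. Re (w * cnj (unit_root M j))) = Re (w * cnj (\<Sum>j<M. unit_root M j))"
    by (simp add: Re_sum sum_distrib_left)
  then show ?thesis
    using sum_unit_roots[OF assms] by simp
qed

lemma sum_norm_sq_add_unit_root:
  assumes "2 \<le> M"
  shows "(\<Sum>j<M. (cmod (g + c * unit_root M j))\<^sup>2) = real M * ((cmod g)\<^sup>2 + (cmod c)\<^sup>2)"
proof -
  have "(\<Sum>j<M. (cmod (g + c * unit_root M j))\<^sup>2)
      = (\<Sum>j<M. (cmod g)\<^sup>2 + (cmod c)\<^sup>2) + 2 * (\<Sum>j<M. Re (g * cnj c * cnj (unit_root M j)))"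
    by (simp add: norm_add_sq sum.distrib sum_distrib_left norm_mult power_mult_distrib mult.assoc)
  also have "(\<Sum>j<M. Re (g * cnj c * cnj (unit_root M j))) = 0"
    by (rule sum_Re_mult_cnj_unit_roots[OF assms])
  finally show ?thesis
    by simp
qed

lemma sum_norm_pow4_add_unit_root:
  assumes "2 \<le> M"
  shows "(\<Sum>j<M. (cmod (g + c * unit_root M j)) ^ 4)
    \<le> real M * ((cmod g)\<^sup>2 + (cmod c)\<^sup>2)\<^sup>2 + 4 * real M * (cmod g)\<^sup>2 * (cmod c)\<^sup>2"
proof -
  define A where "A = (cmod g)\<^sup>2 + (cmod c)\<^sup>2"
  define w where "w j = Re (g * cnj c * cnj (unit_root M j))" for j
  have sq: "(cmod (g + c * unit_root M j))\<^sup>2 = A + 2 * w j" for j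
    by (simp add: norm_add_sq A_def w_def norm_mult power_mult_distrib mult.assoc)
  have expand: "(cmod (g + c * unit_root M j)) ^ 4 = A\<^sup>2 + 4 * A * w j + 4 * (w j)\<^sup>2" for j
  proof -
    have "(cmod (g + c * unit_root M j)) ^ 4 = ((cmod (g + c * unit_root M j))\<^sup>2)\<^sup>2"
      by (simp flip: power_mult)
    then show ?thesis
      unfolding sq by (simp add: power2_eq_square algebra_simps)
  qed
  have w_sq: "(w j)\<^sup>2 \<le> (cmod g)\<^sup>2 * (cmod c)\<^sup>2" for j
  proof -
    have "\<bar>w j\<bar> \<le> cmod g * cmod c"
      using abs_Re_le_cmod[of "g * cnj c * cnj (unit_root M j)"] by (simp add: w_def norm_mult)
    then show ?thesis
      by (metis abs_ge_zero power_mono power_mult_distrib power2_abs)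
  qed
  have "(\<Sum>j<M. (cmod (g + c * unit_root M j)) ^ 4)
      = real M * A\<^sup>2 + 4 * A * (\<Sum>j<M. w j) + 4 * (\<Sum>j<M. (w j)\<^sup>2)"
    by (simp add: expand sum.distrib sum_distrib_left)
  moreover have "(\<Sum>j<M. w j) = 0"
    unfolding w_def by (rule sum_Re_mult_cnj_unit_roots[OF assms])
  moreover have "(\<Sum>j<M. (w j)\<^sup>2) \<le> real M * ((cmod g)\<^sup>2 * (cmod c)\<^sup>2)"
    using sum_mono[of "{..<M}", OF w_sq] by simp
  ultimately show ?thesis
    by (simp add: A_def)
qed

section \<open>Khintchine's inequality for roots of unity\<close>

definition unit_root_sum :: "nat \<Rightarrow> 'i set \<Rightarrow> ('i \<Rightarrow> complex) \<Rightarrow> ('i \<Rightarrow> nat) \<Rightarrow> complex" where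
  "unit_root_sum M J b s = (\<Sum>j\<in>J. b j * unit_root M (s j))"

lemma unit_root_sum_insert:
  assumes "finite F" "x \<notin> F"
  shows "unit_root_sum M (insert x F) b (h(x := y)) = unit_root_sum M F b h + b x * unit_root M y"
proof -
  have "(\<Sum>j\<in>F. b j * unit_root M ((h(x := y)) j)) = (\<Sum>j\<in>F. b j * unit_root M (h j))"
    using assms(2) by (intro sum.cong) auto
  then show ?thesis
    using assms by (simp add: unit_root_sum_def)
qed

lemma sum_PiE_insert_unit_root_sum:
  assumes "finite F" "x \<notin> F"
  shows "(\<Sum>s\<in>PiE (insert x F) (\<lambda>_. {..<M}). f (unit_root_sum M (insert x F) b s))
    = (\<Sum>h\<in>PiE F (\<lambda>_. {..<M}). \<Sum>y<M. f (unit_root_sum M F b h + b x * unit_root M y))"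
  by (simp add: sum_PiE_insert[OF assms(2)] unit_root_sum_insert[OF assms] sum.swap[of _ "{..<M}"])

lemma second_moment_unit_root_sum:
  assumes "2 \<le> M" "finite J"
  shows "(\<Sum>s\<in>PiE J (\<lambda>_. {..<M}). (cmod (unit_root_sum M J b s))\<^sup>2)
    = real M ^ card J * (\<Sum>j\<in>J. (cmod (b j))\<^sup>2)"
  using assms(2)
proof (induction J rule: finite_induct)
  case empty
  then show ?case
    by (simp add: unit_root_sum_def)
next
  case (insert x F)
  let ?P = "PiE F (\<lambda>_. {..<M})"
  have "(\<Sum>s\<in>PiE (insert x F) (\<lambda>_. {..<M}). (cmod (unit_root_sum M (insert x F) b s))\<^sup>2)
      = (\<Sum>h\<in>?P. real M * ((cmod (unit_root_sum M F b h))\<^sup>2 + (cmod (b x))\<^sup>2))"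
    unfolding sum_PiE_insert_unit_root_sum[OF insert.hyps, where f = "\<lambda>z. (cmod z)\<^sup>2"]
    by (simp add: sum_norm_sq_add_unit_root[OF assms(1)])
  also have "\<dots> = real M * (\<Sum>h\<in>?P. (cmod (unit_root_sum M F b h))\<^sup>2)
      + real M * real (card ?P) * (cmod (b x))\<^sup>2"
    by (simp add: sum.distrib sum_distrib_left distrib_left)
  finally show ?case
    using insert by (simp add: card_PiE finite_PiE algebra_simps)
qed

lemma fourth_moment_unit_root_sum:
  assumes "2 \<le> M" "finite J"
  shows "(\<Sum>s\<in>PiE J (\<lambda>_. {..<M}). (cmod (unit_root_sum M J b s)) ^ 4)
    \<le> 3 * real M ^ card J * (\<Sum>j\<in>J. (cmod (b j))\<^sup>2)\<^sup>2"
  using assms(2)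
proof (induction J rule: finite_induct)
  case empty
  then show ?case
    by (simp add: unit_root_sum_def)
next
  case (insert x F)
  let ?P = "PiE F (\<lambda>_. {..<M})"
  define X where "X h = cmod (unit_root_sum M F b h)" for h
  define S where "S = (\<Sum>j\<in>F. (cmod (b j))\<^sup>2)"
  define c where "c = cmod (b x)"
  have card: "real (card ?P) = real M ^ card F"
    using insert.hyps by (simp add: card_PiE)
  have "(\<Sum>s\<in>PiE (insert x F) (\<lambda>_. {..<M}). (cmod (unit_root_sum M (insert x F) b s)) ^ 4)
      \<le> (\<Sum>h\<in>?P. real M * ((X h)\<^sup>2 + c\<^sup>2)\<^sup>2 + 4 * real M * (X h)\<^sup>2 * c\<^sup>2)"
    unfolding sum_PiE_insert_unit_root_sum[OF insert.hyps, where f = "\<lambda>z. cmod z ^ 4"] X_def c_def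
    by (intro sum_mono sum_norm_pow4_add_unit_root[OF assms(1)])
  also have "\<dots> = real M * ((\<Sum>h\<in>?P. (X h) ^ 4) + 6 * c\<^sup>2 * (\<Sum>h\<in>?P. (X h)\<^sup>2)
      + real (card ?P) * c ^ 4)"
    by (simp add: sum.distrib sum_distrib_left power2_eq_square power4_eq_xxxx algebra_simps)
  also have "\<dots> \<le> real M * (3 * real M ^ card F * S\<^sup>2 + 6 * c\<^sup>2 * (real M ^ card F * S)
      + real M ^ card F * c ^ 4)"
    using insert.IH second_moment_unit_root_sum[OF assms(1) insert.hyps(1), of b]
    by (simp add: X_def S_def card mult_left_mono)
  also have "\<dots> \<le> 3 * real M ^ card (insert x F) * (S + c\<^sup>2)\<^sup>2"
    using insert.hyps by (simp add: c_def power2_eq_square power4_eq_xxxx algebra_simps)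
  finally show ?case
    using insert.hyps by (simp add: S_def c_def add.commute)
qed

lemma le_twice_mean_of_fourth_moment:
  fixes X :: "'a \<Rightarrow> real"
  assumes "finite P" "\<And>s. s \<in> P \<Longrightarrow> 0 \<le> X s" "0 < K" "0 \<le> \<sigma>"
    and second: "(\<Sum>s\<in>P. (X s)\<^sup>2) = K * \<sigma>\<^sup>2"
    and fourth: "(\<Sum>s\<in>P. (X s) ^ 4) \<le> 3 * K * \<sigma> ^ 4"
  shows "\<sigma> \<le> 2 * ((\<Sum>s\<in>P. X s) / K)"
proof -
  have pointwise: "12 * \<sigma>\<^sup>2 * x\<^sup>2 \<le> 16 * \<sigma> ^ 3 * x + x ^ 4" if "0 \<le> x" for x
  proof -
    have "0 \<le> x * ((x - 2 * \<sigma>)\<^sup>2 * (x + 4 * \<sigma>))"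
      using that assms(4) by simp
    then show ?thesis
      by (simp add: power2_eq_square power3_eq_cube power4_eq_xxxx algebra_simps)
  qed
  have "(\<Sum>s\<in>P. 12 * \<sigma>\<^sup>2 * (X s)\<^sup>2) \<le> (\<Sum>s\<in>P. 16 * \<sigma> ^ 3 * X s + (X s) ^ 4)"
    using assms(2) pointwise by (intro sum_mono) auto
  then have "12 * \<sigma>\<^sup>2 * (K * \<sigma>\<^sup>2) \<le> 16 * \<sigma> ^ 3 * (\<Sum>s\<in>P. X s) + 3 * K * \<sigma> ^ 4"
    using second fourth by (simp add: sum.distrib flip: sum_distrib_left)
  then have "\<sigma> ^ 3 * (9 * K * \<sigma>) \<le> \<sigma> ^ 3 * (16 * (\<Sum>s\<in>P. X s))"
    by (simp add: power2_eq_square power3_eq_cube power4_eq_xxxx algebra_simps)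
  then have "9 * K * \<sigma> \<le> 16 * (\<Sum>s\<in>P. X s) \<or> \<sigma> = 0"
    using assms(4) by (cases "\<sigma> = 0") (simp_all add: mult_le_cancel_left_pos)
  moreover have "0 \<le> (\<Sum>s\<in>P. X s)"
    using assms(2) by (simp add: sum_nonneg)
  ultimately show ?thesis
    using assms(3) by (auto simp: field_simps)
qed

lemma Khintchine_unit_root_sum:
  assumes "2 \<le> M" "finite J"
  shows "sqrt (\<Sum>j\<in>J. (cmod (b j))\<^sup>2)
    \<le> 2 * ((1 / real M) ^ card J * (\<Sum>s\<in>PiE J (\<lambda>_. {..<M}). cmod (unit_root_sum M J b s)))"
proof -
  define S where "S = (\<Sum>j\<in>J. (cmod (b j))\<^sup>2)"
  have "0 \<le> S"
    by (simp add: S_def sum_nonneg)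
  then have sq: "(sqrt S)\<^sup>2 = S"
    by simp
  have "sqrt S ^ 4 = ((sqrt S)\<^sup>2)\<^sup>2"
    by (simp flip: power_mult)
  with sq have "sqrt S ^ 4 = S\<^sup>2"
    by simp
  then have "sqrt S \<le> 2 * ((\<Sum>s\<in>PiE J (\<lambda>_. {..<M}). cmod (unit_root_sum M J b s)) / real M ^ card J)"
    using assms sq second_moment_unit_root_sum[OF assms, of b] fourth_moment_unit_root_sum[OF assms, of b]
    by (intro le_twice_mean_of_fourth_moment) (simp_all add: S_def finite_PiE)
  then show ?thesis
    by (simp add: S_def power_one_over)
qed

section \<open>Multilinear polynomials on the grid of roots of unity\<close>

(* P(z), with the variable z^(k+1)_(n+1) of the paper stored as z (k, n). *)
definition multipoly :: "nat \<Rightarrow> nat \<Rightarrow> (nat list \<Rightarrow> complex) \<Rightarrow> (nat \<times> nat \<Rightarrow> complex) \<Rightarrow> complex" where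
  "multipoly m N a z = (\<Sum>ns\<in>idx m N. a ns * (\<Prod>k<m. z (k, ns ! k)))"

definition phases :: "nat \<Rightarrow> nat \<Rightarrow> nat \<Rightarrow> (nat \<times> nat \<Rightarrow> nat) set" where
  "phases M m N = PiE ({..<m} \<times> {..<N}) (\<lambda>_. {..<M})"

lemma E_MMp_multipoly:
  "E_MMp m M p N a = ((1 / real M) ^ (N * m) *
     (\<Sum>t\<in>phases M m N. cmod (multipoly m N a (unit_root M \<circ> t)) powr p)) powr (1 / p)"
  by (simp add: E_MMp_def phases_def multipoly_def unit_root_def)

lemma finite_idx [simp]: "finite (idx m N)"
proof -
  have "idx m N \<subseteq> {xs. set xs \<subseteq> {..<N} \<and> length xs = m}"
    by (auto simp: idx_def)
  then show ?thesis
    by (rule finite_subset) (simp add: finite_lists_length_eq)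
qed

lemma idx_nth_less: "ns \<in> idx m N \<Longrightarrow> k < m \<Longrightarrow> ns ! k < N"
  using nth_mem by (fastforce simp: idx_def)

lemma sum_idx_Suc: "(\<Sum>ns\<in>idx (Suc m) N. g ns) = (\<Sum>ns\<in>idx m N. \<Sum>n<N. g (ns @ [n]))"
proof -
  have "bij_betw (\<lambda>(ns, n). ns @ [n]) (idx m N \<times> {..<N}) (idx (Suc m) N)"
  proof (rule bij_betw_byWitness[where f' = "\<lambda>xs. (butlast xs, last xs)"])
    show "\<forall>xs\<in>idx (Suc m) N. (\<lambda>(ns, n). ns @ [n]) (butlast xs, last xs) = xs"
      by (auto simp: idx_def) (metis append_butlast_last_id list.size(3) nat.simps(3))
    show "(\<lambda>xs. (butlast xs, last xs)) ` idx (Suc m) N \<subseteq> idx m N \<times> {..<N}"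
      by (auto simp: idx_def dest!: in_set_butlastD)
        (metis Zero_not_Suc last_in_set length_0_conv lessThan_iff subsetD)
  qed (auto simp: idx_def)
  then show ?thesis
    by (simp add: sum.reindex_bij_betw[symmetric] sum.cartesian_product split_def)
qed

lemma multipoly_cong:
  assumes "\<And>k n. k < m \<Longrightarrow> n < N \<Longrightarrow> z (k, n) = z' (k, n)"
  shows "multipoly m N a z = multipoly m N a z'"
  unfolding multipoly_def using assms idx_nth_less
  by (intro sum.cong refl arg_cong2[where f = "(*)"] prod.cong) auto

lemma multipoly_Suc:
  "multipoly (Suc m) N a z = (\<Sum>n<N. multipoly m N (\<lambda>ns. a (ns @ [n])) z * z (m, n))"
proof -
  have "(\<Prod>k<Suc m. z (k, (ns @ [n]) ! k)) = (\<Prod>k<m. z (k, ns ! k)) * z (m, n)"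
    if "ns \<in> idx m N" for ns n
  proof -
    have "length ns = m"
      using that by (simp add: idx_def)
    then show ?thesis
      by (simp add: nth_append)
  qed
  then show ?thesis
    unfolding multipoly_def sum_idx_Suc
    by (subst sum.swap) (simp add: sum_distrib_right mult.assoc)
qed

lemma finite_phases [simp]: "finite (phases M m N)"
  by (simp add: phases_def finite_PiE)

lemma card_phases: "card (phases M m N) = M ^ (N * m)"
  by (simp add: phases_def card_PiE card_cartesian_product mult.commute)

lemma sum_phases_Suc:
  "(\<Sum>t\<in>phases M (Suc m) N. g t)
    = (\<Sum>u\<in>phases M m N. \<Sum>v\<in>PiE ({m} \<times> {..<N}) (\<lambda>_. {..<M}).
        g (merge ({..<m} \<times> {..<N}) ({m} \<times> {..<N}) (u, v)))"
proof -
  have "{..<Suc m} \<times> {..<N} = {..<m} \<times> {..<N} \<union> {m} \<times> {..<N}"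
    by auto
  moreover have "{..<m} \<times> {..<N} \<inter> {m} \<times> {..<N} = {}"
    by auto
  ultimately show ?thesis
    unfolding phases_def by (simp only: sum_PiE_Un)
qed

lemma sum_singleton_times: "(\<Sum>j\<in>{m} \<times> A. f j) = (\<Sum>n\<in>A. f (m, n))"
proof -
  have "{m} \<times> A = Pair m ` A"
    by auto
  then show ?thesis
    by (simp add: sum.reindex inj_on_def)
qed

lemma multipoly_Suc_merge:
  assumes "u \<in> phases M m N"
  shows "multipoly (Suc m) N a (unit_root M \<circ> merge ({..<m} \<times> {..<N}) ({m} \<times> {..<N}) (u, v))
    = unit_root_sum M ({m} \<times> {..<N}) (\<lambda>(_, n). multipoly m N (\<lambda>ns. a (ns @ [n])) (unit_root M \<circ> u)) v"
proof -
  let ?w = "merge ({..<m} \<times> {..<N}) ({m} \<times> {..<N}) (u, v)"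
  have "multipoly m N b (unit_root M \<circ> ?w) = multipoly m N b (unit_root M \<circ> u)" for b
    by (rule multipoly_cong) (simp add: merge_def)
  then show ?thesis
    by (simp add: multipoly_Suc unit_root_sum_def sum_singleton_times merge_def)
qed

lemma l2norm_arr_Suc:
  "l2norm_arr (Suc m) N a = L2_set (\<lambda>n. l2norm_arr m N (\<lambda>ns. a (ns @ [n]))) {..<N}"
  by (simp add: l2norm_arr_def L2_set_def sum_idx_Suc sum_nonneg sum.swap[of _ "{..<N}"])

lemma l2norm_arr_nonneg: "0 \<le> l2norm_arr m N a"
  by (simp add: l2norm_arr_def sum_nonneg)

lemma L2_set_sum_le:
  assumes "finite U"
  shows "L2_set (\<lambda>n. \<Sum>u\<in>U. G n u) A \<le> (\<Sum>u\<in>U. L2_set (\<lambda>n. G n u) A)"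
  using assms
proof (induction U rule: finite_induct)
  case (insert x F)
  have "L2_set (\<lambda>n. \<Sum>u\<in>insert x F. G n u) A = L2_set (\<lambda>n. G n x + (\<Sum>u\<in>F. G n u)) A"
    using insert by simp
  also have "\<dots> \<le> L2_set (\<lambda>n. G n x) A + L2_set (\<lambda>n. \<Sum>u\<in>F. G n u) A"
    by (rule L2_set_triangle_ineq)
  finally show ?case
    using insert by simp
qed (simp add: L2_set_def)

lemma Khintchine_last_variable:
  assumes "2 \<le> M" "u \<in> phases M m N"
  shows "L2_set (\<lambda>n. cmod (multipoly m N (\<lambda>ns. a (ns @ [n])) (unit_root M \<circ> u))) {..<N}
    \<le> 2 * ((1 / real M) ^ N * (\<Sum>v\<in>PiE ({m} \<times> {..<N}) (\<lambda>_. {..<M}).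
          cmod (multipoly (Suc m) N a
            (unit_root M \<circ> merge ({..<m} \<times> {..<N}) ({m} \<times> {..<N}) (u, v)))))"
  using Khintchine_unit_root_sum[OF assms(1), of "{m} \<times> {..<N}"
      "\<lambda>(_, n). multipoly m N (\<lambda>ns. a (ns @ [n])) (unit_root M \<circ> u)"]
  by (simp add: multipoly_Suc_merge[OF assms(2)] L2_set_def sum_singleton_times
      card_cartesian_product)

lemma l2norm_arr_le_mean_multipoly:
  assumes "2 \<le> M"
  shows "l2norm_arr m N a
    \<le> 2 ^ m * ((1 / real M) ^ (N * m) * (\<Sum>t\<in>phases M m N. cmod (multipoly m N a (unit_root M \<circ> t))))"
proof (induction m arbitrary: a)
  case 0
  have "phases M 0 N = {\<lambda>_. undefined}" "idx 0 N = {[]}"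
    by (auto simp: phases_def idx_def)
  then show ?case
    by (simp add: multipoly_def l2norm_arr_def)
next
  case (Suc m)
  define X where "X n u = cmod (multipoly m N (\<lambda>ns. a (ns @ [n])) (unit_root M \<circ> u))" for n u
  define w where "w = (1 / real M) ^ (N * m)"
  have IH: "l2norm_arr m N (\<lambda>ns. a (ns @ [n])) \<le> 2 ^ m * (\<Sum>u\<in>phases M m N. w * X n u)" for n
    unfolding X_def w_def sum_distrib_left[symmetric] by (rule Suc.IH)
  have "l2norm_arr (Suc m) N a \<le> L2_set (\<lambda>n. 2 ^ m * (\<Sum>u\<in>phases M m N. w * X n u)) {..<N}"
    unfolding l2norm_arr_Suc using IH by (intro L2_set_mono) (simp_all add: l2norm_arr_nonneg)
  also have "\<dots> = 2 ^ m * L2_set (\<lambda>n. \<Sum>u\<in>phases M m N. w * X n u) {..<N}"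
    by (rule L2_set_right_distrib[symmetric]) simp
  also have "\<dots> \<le> 2 ^ m * (\<Sum>u\<in>phases M m N. L2_set (\<lambda>n. w * X n u) {..<N})"
    by (intro mult_left_mono L2_set_sum_le) simp_all
  also have "\<dots> = 2 ^ m * (\<Sum>u\<in>phases M m N. w * L2_set (\<lambda>n. X n u) {..<N})"
    by (simp add: L2_set_right_distrib w_def)
  also have "\<dots> \<le> 2 ^ m * (\<Sum>u\<in>phases M m N. w * (2 * ((1 / real M) ^ N *
      (\<Sum>v\<in>PiE ({m} \<times> {..<N}) (\<lambda>_. {..<M}).
        cmod (multipoly (Suc m) N a (unit_root M \<circ> merge ({..<m} \<times> {..<N}) ({m} \<times> {..<N}) (u, v)))))))"
    unfolding X_def using Khintchine_last_variable[OF assms]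
    by (intro mult_left_mono sum_mono) (simp_all add: w_def)
  also have "\<dots> = 2 ^ Suc m * ((1 / real M) ^ (N * Suc m) *
      (\<Sum>t\<in>phases M (Suc m) N. cmod (multipoly (Suc m) N a (unit_root M \<circ> t))))"
    by (simp add: sum_phases_Suc w_def sum_distrib_left power_add algebra_simps)
  finally show ?case .
qed

lemma convex_on_powr_nonneg:
  assumes "1 \<le> p"
  shows "convex_on {0..} (\<lambda>x::real. x powr p)"
proof (rule convex_onI)
  fix u A B :: real
  assume u: "0 < u" "u < 1" and AB: "A \<in> {0..}" "B \<in> {0..}"
  have scaled: "v powr p * C powr p \<le> v * C powr p" if "0 \<le> v" "v \<le> 1" for v C :: real
    using that powr_mono'[of 1 p v] assms by (simp add: mult_right_mono)
  consider "A = 0" | "B = 0" | "0 < A" "0 < B"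
    using AB by force
  then show "((1 - u) *\<^sub>R A + u *\<^sub>R B) powr p \<le> (1 - u) * A powr p + u * B powr p"
  proof cases
    case 1
    then show ?thesis
      using scaled[of u B] u by (simp add: powr_mult)
  next
    case 2
    then show ?thesis
      using scaled[of "1 - u" A] u by (simp add: powr_mult)
  next
    case 3
    then show ?thesis
      using convex_onD[OF powr_convex[OF assms], of u A B] u by simp
  qed
qed simp

lemma mean_le_power_mean:
  fixes u :: "'a \<Rightarrow> real"
  assumes "finite A" "A \<noteq> {}" "1 \<le> p" "\<And>x. x \<in> A \<Longrightarrow> 0 \<le> u x"
  shows "(\<Sum>x\<in>A. u x) / card A \<le> ((\<Sum>x\<in>A. u x powr p) / card A) powr (1 / p)"
proof -
  have card: "0 < real (card A)"
    using assms by (simp add: card_gt_0_iff)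
  have nonneg: "0 \<le> (\<Sum>x\<in>A. u x)"
    using assms(4) by (simp add: sum_nonneg)
  have "((\<Sum>x\<in>A. u x) / card A) powr p \<le> (\<Sum>x\<in>A. u x powr p) / card A"
    using convex_on_sum[OF assms(1,2) convex_on_powr_nonneg[OF assms(3)], of "\<lambda>_. 1 / card A" u]
      card assms(4)
    by (simp add: sum_divide_distrib)
  then have "(((\<Sum>x\<in>A. u x) / card A) powr p) powr (1 / p) \<le> ((\<Sum>x\<in>A. u x powr p) / card A) powr (1 / p)"
    using assms(3) by (intro powr_mono2) auto
  then show ?thesis
    using assms(3) nonneg by (simp add: powr_powr)
qed

lemma l2norm_arr_le_E_MMp:
  assumes "1 \<le> p" "2 \<le> M"
  shows "l2norm_arr m N a \<le> 2 ^ m * E_MMp m M p N a"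
proof -
  have "phases M m N \<noteq> {}"
    using assms(2) by (simp add: phases_def PiE_eq_empty_iff lessThan_empty_iff)
  then have "(1 / real M) ^ (N * m) * (\<Sum>t\<in>phases M m N. cmod (multipoly m N a (unit_root M \<circ> t)))
      \<le> E_MMp m M p N a"
    using mean_le_power_mean[OF finite_phases _ assms(1)]
    by (simp add: E_MMp_multipoly card_phases power_one_over)
  then show ?thesis
    using l2norm_arr_le_mean_multipoly[OF assms(2), of m N a]
    by (meson order_trans mult_left_mono zero_le_numeral zero_le_power)
qed

section \<open>Averages over the grid for variables in the unit disc\<close>

lemma r_M_eq_cos:
  assumes "2 \<le> M"
  shows "r_M M = cos (pi / real M)"
proof -
  have "pi / real M \<le> pi / 2"
    using assms by (intro divide_left_mono) auto
  then have "0 \<le> cos (pi / real M)"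
    by (intro cos_ge_zero) (simp_all add: order_trans[of _ 0])
  moreover have "1 / 2 + 1 / 2 * cos (2 * pi / real M) = (cos (pi / real M))\<^sup>2"
    using cos_double_cos[of "pi / real M"] by (simp add: field_simps)
  ultimately show ?thesis
    by (simp add: r_M_def powr_half_sqrt)
qed

lemma convex_scaled_sum_mem:
  fixes u v :: "'a::real_vector"
  assumes "convex H" "0 \<in> H" "u \<in> H" "v \<in> H" "0 \<le> \<mu>" "0 \<le> \<nu>" "\<mu> + \<nu> \<le> 1"
  shows "\<mu> *\<^sub>R u + \<nu> *\<^sub>R v \<in> H"
proof (cases "\<mu> + \<nu> = 0")
  case True
  then show ?thesis
    using assms by (simp add: add_nonneg_eq_0_iff)
next
  case False
  define s where "s = \<mu> + \<nu>"
  have "0 < s"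
    using False assms by (simp add: s_def)
  have "\<mu> / s + \<nu> / s = 1"
    using \<open>0 < s\<close> by (simp add: s_def flip: add_divide_distrib)
  then have "(\<mu> / s) *\<^sub>R u + (\<nu> / s) *\<^sub>R v \<in> H"
    using assms \<open>0 < s\<close> by (intro convexD) auto
  then have "s *\<^sub>R ((\<mu> / s) *\<^sub>R u + (\<nu> / s) *\<^sub>R v) + (1 - s) *\<^sub>R 0 \<in> H"
    using assms \<open>0 < s\<close> by (intro convexD[OF assms(1) _ assms(2)]) (auto simp: s_def)
  then show ?thesis
    using \<open>0 < s\<close> by (simp add: scaleR_add_right)
qed

lemma cis_sector_decomposition:
  assumes "0 < \<alpha>" "\<alpha> < pi" "0 \<le> \<phi>" "\<phi> \<le> \<alpha>"
  obtains \<mu> \<nu> where "0 \<le> \<mu>" "0 \<le> \<nu>" "\<mu> + \<nu> \<le> 1 / cos (\<alpha> / 2)"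
    "cis \<phi> = of_real \<mu> + of_real \<nu> * cis \<alpha>"
proof
  have sin: "0 < sin \<alpha>" "0 < sin (\<alpha> / 2)" and cos: "0 < cos (\<alpha> / 2)"
    using assms by (auto intro!: sin_gt_zero cos_gt_zero)
  show "0 \<le> sin (\<alpha> - \<phi>) / sin \<alpha>" "0 \<le> sin \<phi> / sin \<alpha>"
    using assms sin by (auto intro!: divide_nonneg_pos sin_ge_zero)
  show "cis \<phi> = of_real (sin (\<alpha> - \<phi>) / sin \<alpha>) + of_real (sin \<phi> / sin \<alpha>) * cis \<alpha>"
    using sin by (intro complex_eqI) (simp_all add: sin_diff field_simps)
  have "sin (\<alpha> - \<phi>) + sin \<phi> = 2 * sin (\<alpha> / 2) * cos ((\<alpha> - 2 * \<phi>) / 2)"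
    by (simp add: sin_plus_sin)
  also have "\<dots> \<le> 2 * sin (\<alpha> / 2)"
    using sin by simp
  also have "\<dots> = sin \<alpha> / cos (\<alpha> / 2)"
    using sin_double[of "\<alpha> / 2"] cos by (simp add: field_simps)
  finally show "sin (\<alpha> - \<phi>) / sin \<alpha> + sin \<phi> / sin \<alpha> \<le> 1 / cos (\<alpha> / 2)"
    using sin by (simp add: add_divide_distrib[symmetric] divide_le_eq field_simps)
qed

lemma cis_eq_unit_root_mult_cis:
  assumes "0 < M" "0 \<le> \<theta>"
  obtains j \<phi> where "0 \<le> \<phi>" "\<phi> \<le> 2 * pi / real M" "cis \<theta> = unit_root M j * cis \<phi>"
proof
  define \<alpha> where "\<alpha> = 2 * pi / real M"
  define j where "j = nat \<lfloor>\<theta> / \<alpha>\<rfloor>"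
  have "0 < \<alpha>"
    using assms by (simp add: \<alpha>_def)
  then have "real j \<le> \<theta> / \<alpha>" "\<theta> / \<alpha> < real j + 1"
    using assms by (simp_all add: j_def)
  then have "real j * \<alpha> \<le> \<theta>" "\<theta> < (real j + 1) * \<alpha>"
    using \<open>0 < \<alpha>\<close> by (simp_all add: pos_le_divide_eq pos_divide_less_eq)
  then show "0 \<le> \<theta> - real j * \<alpha>" "\<theta> - real j * \<alpha> \<le> 2 * pi / real M"
    unfolding \<alpha>_def[symmetric] by (simp_all add: algebra_simps)
  show "cis \<theta> = unit_root M j * cis (\<theta> - real j * \<alpha>)"
    by (simp add: unit_root_def cis_mult \<alpha>_def)
qed

lemma unit_root_in_hull:
  assumes "0 < M"
  shows "unit_root M j \<in> convex hull (unit_root M ` {..<M})"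
  using assms unit_root_mod[OF assms, of j] by (metis hull_inc image_eqI lessThan_iff mod_less_divisor)

lemma zero_in_hull_unit_roots:
  assumes "2 \<le> M"
  shows "0 \<in> convex hull (unit_root M ` {..<M})"
proof -
  have "(\<Sum>j<M. (1 / real M) *\<^sub>R unit_root M j) \<in> convex hull (unit_root M ` {..<M})"
    using assms by (intro convex_sum) (auto intro: unit_root_in_hull)
  then show ?thesis
    using sum_unit_roots[OF assms] by (simp add: scaleR_conv_of_real flip: sum_divide_distrib)
qed

lemma unit_root_decomposition:
  assumes "3 \<le> M"
  obtains j \<mu> \<nu> where "0 \<le> \<mu>" "0 \<le> \<nu>" "\<mu> + \<nu> \<le> cmod w / cos (pi / real M)"
    "w = \<mu> *\<^sub>R unit_root M j + \<nu> *\<^sub>R unit_root M (Suc j)"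
proof -
  define \<alpha> where "\<alpha> = 2 * pi / real M"
  have \<alpha>: "0 < \<alpha>" "\<alpha> < pi"
    using assms by (simp_all add: \<alpha>_def field_simps)
  have "0 \<le> Arg w + 2 * pi"
    using Arg_bounded[of w] by linarith
  then obtain j \<phi> where \<phi>: "0 \<le> \<phi>" "\<phi> \<le> \<alpha>" and j: "cis (Arg w + 2 * pi) = unit_root M j * cis \<phi>"
    using assms cis_eq_unit_root_mult_cis unfolding \<alpha>_def by (metis not_numeral_le_zero not_gr_zero)
  obtain \<mu> \<nu> where \<mu>\<nu>: "0 \<le> \<mu>" "0 \<le> \<nu>" "\<mu> + \<nu> \<le> 1 / cos (\<alpha> / 2)"
    and sector: "cis \<phi> = of_real \<mu> + of_real \<nu> * cis \<alpha>"
    using cis_sector_decomposition[OF \<alpha> \<phi>] by blast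
  have "cis (Arg w) = cis (Arg w + 2 * pi)"
    by (intro complex_eqI) simp_all
  then have "w = of_real (cmod w) * (unit_root M j * (of_real \<mu> + of_real \<nu> * cis \<alpha>))"
    using rcis_cmod_Arg[of w] j sector by (simp add: rcis_def)
  moreover have "unit_root M (Suc j) = cis \<alpha> * unit_root M j"
    by (simp add: unit_root_def \<alpha>_def cis_mult add_divide_distrib algebra_simps)
  ultimately have w: "w = (cmod w * \<mu>) *\<^sub>R unit_root M j + (cmod w * \<nu>) *\<^sub>R unit_root M (Suc j)"
    by (simp add: scaleR_conv_of_real algebra_simps)
  have "cmod w * \<mu> + cmod w * \<nu> \<le> cmod w / cos (pi / real M)"
    using mult_left_mono[OF \<mu>\<nu>(3), of "cmod w"] by (simp add: \<alpha>_def distrib_left[symmetric])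
  from that[OF _ _ this w] \<mu>\<nu> show ?thesis
    by simp
qed

lemma norm_le_cos_imp_mem_hull_unit_roots:
  assumes "3 \<le> M" "cmod w \<le> cos (pi / real M)"
  shows "w \<in> convex hull (unit_root M ` {..<M})"
proof -
  obtain j \<mu> \<nu> where \<mu>\<nu>: "0 \<le> \<mu>" "0 \<le> \<nu>" "\<mu> + \<nu> \<le> cmod w / cos (pi / real M)"
    and w: "w = \<mu> *\<^sub>R unit_root M j + \<nu> *\<^sub>R unit_root M (Suc j)"
    by (rule unit_root_decomposition[OF assms(1)])
  have "pi / real M \<le> pi / 3"
    using assms(1) by (intro divide_left_mono) auto
  moreover have "0 < pi / real M"
    using assms(1) by simp
  ultimately have "0 < cos (pi / real M)"
    using pi_gt_zero by (intro cos_gt_zero) linarith+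
  then have "cmod w / cos (pi / real M) \<le> 1"
    using assms(2) by simp
  then have "\<mu> + \<nu> \<le> 1"
    using \<mu>\<nu>(3) by linarith
  moreover have "unit_root M i \<in> convex hull (unit_root M ` {..<M})" for i
    using assms(1) by (intro unit_root_in_hull) simp
  moreover have "0 \<in> convex hull (unit_root M ` {..<M})"
    using assms(1) by (intro zero_in_hull_unit_roots) simp
  ultimately show ?thesis
    unfolding w using \<mu>\<nu> by (intro convex_scaled_sum_mem) simp_all
qed

lemma separately_convex_bound:
  fixes g :: "('i \<Rightarrow> 'a::real_vector) \<Rightarrow> real"
  assumes "finite D"
    and convex: "\<And>y i. i \<in> D \<Longrightarrow> convex_on (convex hull V) (\<lambda>z. g (y(i := z)))"
    and vertex: "\<And>y. (\<forall>i\<in>D. y i \<in> V) \<Longrightarrow> g y \<le> B"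
    and y: "\<forall>i\<in>D. y i \<in> convex hull V"
  shows "g y \<le> B"
proof -
  have "\<forall>y. (\<forall>i\<in>F. y i \<in> convex hull V) \<and> (\<forall>i\<in>D - F. y i \<in> V) \<longrightarrow> g y \<le> B"
    if "F \<subseteq> D" for F
    using finite_subset[OF that assms(1)] that
  proof (induction F rule: finite_induct)
    case empty
    then show ?case
      using vertex by simp
  next
    case (insert i F)
    show ?case
    proof (intro allI impI)
      fix y
      assume hull: "(\<forall>j\<in>insert i F. y j \<in> convex hull V) \<and> (\<forall>j\<in>D - insert i F. y j \<in> V)"
      have "\<forall>v\<in>V. g (y(i := v)) \<le> B"
        using insert hull by (auto intro!: insert.IH[rule_format])
      then have "g (y(i := y i)) \<le> B"
        using convex_on_convex_hull_bound[OF convex] insert.prems hull by blast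
      then show "g y \<le> B"
        by simp
    qed
  qed
  then show ?thesis
    using y by blast
qed

lemma convex_on_sum_norm_affine_powr:
  fixes \<alpha> \<beta> :: "'t \<Rightarrow> complex"
  assumes "1 \<le> p"
  shows "convex_on UNIV (\<lambda>z. \<Sum>t\<in>T. cmod (\<alpha> t + z * \<beta> t) powr p)"
proof (rule convex_onI)
  fix u :: real and x y :: complex
  assume u: "0 < u" "u < 1"
  have "cmod (\<alpha> t + ((1 - u) *\<^sub>R x + u *\<^sub>R y) * \<beta> t) powr p
      \<le> (1 - u) * cmod (\<alpha> t + x * \<beta> t) powr p + u * cmod (\<alpha> t + y * \<beta> t) powr p" for t
  proof -
    have "\<alpha> t + ((1 - u) *\<^sub>R x + u *\<^sub>R y) * \<beta> t
        = (1 - u) *\<^sub>R (\<alpha> t + x * \<beta> t) + u *\<^sub>R (\<alpha> t + y * \<beta> t)"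
      by (simp add: scaleR_conv_of_real algebra_simps)
    then have "cmod (\<alpha> t + ((1 - u) *\<^sub>R x + u *\<^sub>R y) * \<beta> t)
        \<le> (1 - u) * cmod (\<alpha> t + x * \<beta> t) + u * cmod (\<alpha> t + y * \<beta> t)"
      using u norm_triangle_ineq[of "(1 - u) *\<^sub>R (\<alpha> t + x * \<beta> t)" "u *\<^sub>R (\<alpha> t + y * \<beta> t)"]
      by simp
    then have "cmod (\<alpha> t + ((1 - u) *\<^sub>R x + u *\<^sub>R y) * \<beta> t) powr p
        \<le> ((1 - u) * cmod (\<alpha> t + x * \<beta> t) + u * cmod (\<alpha> t + y * \<beta> t)) powr p"
      using assms by (intro powr_mono2) auto
    also have "\<dots> \<le> (1 - u) * cmod (\<alpha> t + x * \<beta> t) powr p + u * cmod (\<alpha> t + y * \<beta> t) powr p"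
      using convex_onD[OF convex_on_powr_nonneg[OF assms], of u] u by simp
    finally show ?thesis .
  qed
  then show "(\<Sum>t\<in>T. cmod (\<alpha> t + ((1 - u) *\<^sub>R x + u *\<^sub>R y) * \<beta> t) powr p)
      \<le> (1 - u) * (\<Sum>t\<in>T. cmod (\<alpha> t + x * \<beta> t) powr p) + u * (\<Sum>t\<in>T. cmod (\<alpha> t + y * \<beta> t) powr p)"
    by (simp add: sum_distrib_left sum_mono flip: sum.distrib)
qed simp

lemma multipoly_row_linear:
  assumes "k0 < m"
    and "\<And>k n. k \<noteq> k0 \<Longrightarrow> z1 (k, n) = z (k, n) \<and> z2 (k, n) = z (k, n)"
    and "\<And>n. z (k0, n) = c * z1 (k0, n) + z2 (k0, n)"
  shows "multipoly m N a z = c * multipoly m N a z1 + multipoly m N a z2"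
proof -
  have "(\<Prod>k<m. z (k, ns ! k)) = c * (\<Prod>k<m. z1 (k, ns ! k)) + (\<Prod>k<m. z2 (k, ns ! k))" for ns
  proof -
    have rest: "(\<Prod>k\<in>{..<m} - {k0}. z' (k, ns ! k)) = (\<Prod>k\<in>{..<m} - {k0}. z (k, ns ! k))"
      if "z' = z1 \<or> z' = z2" for z'
      using that assms(2) by (intro prod.cong) auto
    have remove: "(\<Prod>k<m. z' (k, ns ! k)) = z' (k0, ns ! k0) * (\<Prod>k\<in>{..<m} - {k0}. z' (k, ns ! k))"
      for z'
      using assms(1) by (intro prod.remove) auto
    show ?thesis
      using remove[of z] remove[of z1] remove[of z2] rest[of z1] rest[of z2] assms(3)
      by (simp add: algebra_simps)
  qed
  then show ?thesis
    by (simp add: multipoly_def sum_distrib_left sum.distrib algebra_simps)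
qed

lemma multipoly_affine_in_entry:
  assumes "k0 < m"
  shows "multipoly m N a (z((k0, n0) := w))
    = multipoly m N a (z((k0, n0) := 0))
      + w * (multipoly m N a (z((k0, n0) := 1)) - multipoly m N a (z((k0, n0) := 0)))"
proof -
  define e where "e i = (if i = (k0, n0) then 1 else if fst i = k0 then 0 else z i)" for i
  have "multipoly m N a (z((k0, n0) := w')) = w' * multipoly m N a e + multipoly m N a (z((k0, n0) := 0))"
    for w'
    using assms by (intro multipoly_row_linear) (auto simp: e_def)
  from this[of w] this[of 1] show ?thesis
    by simp
qed

lemma multipoly_scale: "multipoly m N a (\<lambda>i. c * z i) = c ^ m * multipoly m N a z"
  by (simp add: multipoly_def prod.distrib sum_distrib_left algebra_simps)

lemma bij_betw_phases_translate:
  assumes "0 < M"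
  shows "bij_betw (\<lambda>t. restrict (\<lambda>i. (t i + s i) mod M) ({..<m} \<times> {..<N})) (phases M m N) (phases M m N)"
proof -
  let ?f = "\<lambda>t. restrict (\<lambda>i. (t i + s i) mod M) ({..<m} \<times> {..<N})"
  have "inj_on ?f (phases M m N)"
  proof (rule inj_onI)
    fix t t' assume t: "t \<in> phases M m N" and t': "t' \<in> phases M m N" and eq: "?f t = ?f t'"
    show "t = t'"
    proof (rule PiE_ext[OF t[unfolded phases_def] t'[unfolded phases_def]])
      fix i assume i: "i \<in> {..<m} \<times> {..<N}"
      then have "[t i + s i = t' i + s i] (mod M)"
        using fun_cong[OF eq, of i] by (simp add: cong_def)
      then show "t i = t' i"
        using t t' i by (auto simp: phases_def cong_add_rcancel_nat intro: cong_less_modulus_unique_nat)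
    qed
  qed
  moreover have "?f ` phases M m N \<subseteq> phases M m N"
    using assms by (auto simp: phases_def)
  ultimately show ?thesis
    by (simp add: bij_betw_def endo_inj_surj)
qed

lemma sum_phases_multipoly_translate:
  assumes "0 < M"
  shows "(\<Sum>t\<in>phases M m N. f (multipoly m N a (\<lambda>i. unit_root M (t i) * unit_root M (s i))))
    = (\<Sum>t\<in>phases M m N. f (multipoly m N a (unit_root M \<circ> t)))"
proof -
  let ?f = "\<lambda>t. restrict (\<lambda>i. (t i + s i) mod M) ({..<m} \<times> {..<N})"
  have "multipoly m N a (\<lambda>i. unit_root M (t i) * unit_root M (s i)) = multipoly m N a (unit_root M \<circ> ?f t)"
    for t
    using assms by (intro multipoly_cong) (simp add: unit_root_mod unit_root_add)
  then show ?thesis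
    using sum.reindex_bij_betw[OF bij_betw_phases_translate[OF assms, of s m N]] by simp
qed

lemma convex_on_sum_multipoly_entry:
  assumes "1 \<le> p" "k0 < m"
  shows "convex_on UNIV
    (\<lambda>z. \<Sum>t\<in>T. cmod (multipoly m N a (\<lambda>i. unit_root M (t i) * (y((k0, n0) := z)) i)) powr p)"
proof -
  define A where "A t w = multipoly m N a ((\<lambda>i. unit_root M (t i) * y i)((k0, n0) := w))" for t w
  have "(\<lambda>i. unit_root M (t i) * (y((k0, n0) := z)) i)
      = (\<lambda>i. unit_root M (t i) * y i)((k0, n0) := unit_root M (t (k0, n0)) * z)" for t z
    by auto
  then have "multipoly m N a (\<lambda>i. unit_root M (t i) * (y((k0, n0) := z)) i)
      = A t 0 + z * (unit_root M (t (k0, n0)) * (A t 1 - A t 0))" for t z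
    unfolding A_def
    using multipoly_affine_in_entry[OF assms(2), where z = "\<lambda>i. unit_root M (t i) * y i"
        and w = "unit_root M (t (k0, n0)) * z"]
    by (simp add: algebra_simps)
  then show ?thesis
    using convex_on_sum_norm_affine_powr[OF assms(1)] by simp
qed

lemma sum_multipoly_at_unit_roots:
  assumes "0 < M" "\<forall>i\<in>{..<m} \<times> {..<N}. y i \<in> unit_root M ` {..<M}"
  shows "(\<Sum>t\<in>phases M m N. f (multipoly m N a (\<lambda>i. unit_root M (t i) * y i)))
    = (\<Sum>t\<in>phases M m N. f (multipoly m N a (unit_root M \<circ> t)))"
proof -
  have "\<forall>i\<in>{..<m} \<times> {..<N}. \<exists>j. y i = unit_root M j"
    using assms(2) by blast
  then obtain s where s: "\<forall>i\<in>{..<m} \<times> {..<N}. y i = unit_root M (s i)"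
    by (metis bchoice)
  then have "multipoly m N a (\<lambda>i. unit_root M (t i) * y i)
      = multipoly m N a (\<lambda>i. unit_root M (t i) * unit_root M (s i))" for t
    by (intro multipoly_cong) simp
  then show ?thesis
    using sum_phases_multipoly_translate[OF assms(1)] by simp
qed

lemma sum_multipoly_powr_le_on_hull:
  assumes "0 < M" "1 \<le> p" "\<forall>i\<in>{..<m} \<times> {..<N}. y i \<in> convex hull (unit_root M ` {..<M})"
  shows "(\<Sum>t\<in>phases M m N. cmod (multipoly m N a (\<lambda>i. unit_root M (t i) * y i)) powr p)
    \<le> (\<Sum>t\<in>phases M m N. cmod (multipoly m N a (unit_root M \<circ> t)) powr p)"
    (is "?G y \<le> ?B")
proof (rule separately_convex_bound[where D = "{..<m} \<times> {..<N}" and V = "unit_root M ` {..<M}"])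
  show "convex_on (convex hull (unit_root M ` {..<M})) (\<lambda>z. ?G (y'(i := z)))"
    if i: "i \<in> {..<m} \<times> {..<N}" for y' i
  proof -
    obtain k0 n0 where "i = (k0, n0)" "k0 < m"
      using i by auto
    have "convex_on UNIV (\<lambda>z. ?G (y'((k0, n0) := z)))"
      by (rule convex_on_sum_multipoly_entry[OF assms(2) \<open>k0 < m\<close>])
    then show ?thesis
      unfolding \<open>i = (k0, n0)\<close> by (rule convex_on_subset) auto
  qed
  show "?G y' \<le> ?B" if "\<forall>i\<in>{..<m} \<times> {..<N}. y' i \<in> unit_root M ` {..<M}" for y'
    using sum_multipoly_at_unit_roots[OF assms(1) that, where f = "\<lambda>z. cmod z powr p"] by simp
qed (use assms(3) in simp_all)

lemma sum_multipoly_powr_le: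
  assumes "3 \<le> M" "1 \<le> p" and y: "\<And>k n. k < m \<Longrightarrow> n < N \<Longrightarrow> cmod (y (k, n)) \<le> 1"
  shows "(\<Sum>t\<in>phases M m N. cmod (multipoly m N a (\<lambda>i. unit_root M (t i) * y i)) powr p)
    \<le> (r_M M powr - real m) powr p * (\<Sum>t\<in>phases M m N. cmod (multipoly m N a (unit_root M \<circ> t)) powr p)"
    (is "?G y \<le> _ * ?B")
proof -
  define r where "r = r_M M"
  have r: "r = cos (pi / real M)" "0 < r"
    using assms(1) by (auto simp: r_def r_M_eq_cos field_simps intro!: cos_gt_zero)
  have "\<forall>i\<in>{..<m} \<times> {..<N}. r * y i \<in> convex hull (unit_root M ` {..<M})"
    using y r by (auto intro!: norm_le_cos_imp_mem_hull_unit_roots[OF assms(1)] simp: norm_mult mult_left_le)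
  then have bound: "?G (\<lambda>i. r * y i) \<le> ?B"
    using assms(1,2) by (intro sum_multipoly_powr_le_on_hull) simp_all
  have "multipoly m N a (\<lambda>i. unit_root M (t i) * (r * y i))
      = of_real r ^ m * multipoly m N a (\<lambda>i. unit_root M (t i) * y i)" for t
    using multipoly_scale[of m N a "of_real r" "\<lambda>i. unit_root M (t i) * y i"]
    by (simp add: algebra_simps)
  then have scale: "?G (\<lambda>i. r * y i) = (r ^ m) powr p * ?G y"
    using r by (simp add: norm_mult norm_power powr_mult sum_distrib_left)
  have inverse: "(r powr - real m) powr p * (r ^ m) powr p = 1"
    using r by (simp add: powr_minus powr_realpow flip: powr_mult)
  have "?G y = (r powr - real m) powr p * ?G (\<lambda>i. r * y i)"
    unfolding scale by (simp only: mult.assoc[symmetric] inverse mult.left_neutral)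
  also have "\<dots> \<le> (r powr - real m) powr p * ?B"
    using bound by (intro mult_left_mono) simp_all
  finally show ?thesis
    by (simp add: r_def)
qed

section \<open>The extremal multilinear form\<close>

lemma Holder_inequality_sum:
  fixes u v :: "'a \<Rightarrow> real"
  assumes "finite A" "1 < p" "1 < q" "1 / p + 1 / q = 1"
    and u: "\<And>x. x \<in> A \<Longrightarrow> 0 \<le> u x" and v: "\<And>x. x \<in> A \<Longrightarrow> 0 \<le> v x"
  shows "(\<Sum>x\<in>A. u x * v x) \<le> (\<Sum>x\<in>A. u x powr p) powr (1 / p) * (\<Sum>x\<in>A. v x powr q) powr (1 / q)"
proof -
  define U where "U = (\<Sum>x\<in>A. u x powr p) powr (1 / p)"
  define V where "V = (\<Sum>x\<in>A. v x powr q) powr (1 / q)"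
  show ?thesis
  proof (cases "U = 0 \<or> V = 0")
    case True
    then have "(\<forall>x\<in>A. u x = 0) \<or> (\<forall>x\<in>A. v x = 0)"
      using assms by (auto simp: U_def V_def sum_nonneg_eq_0_iff)
    then show ?thesis
      by (auto simp: U_def V_def)
  next
    case False
    then have "0 < U" "0 < V"
      by (simp_all add: U_def V_def)
    have powers: "(\<Sum>x\<in>A. u x powr p) = U powr p" "(\<Sum>x\<in>A. v x powr q) = V powr q"
      using assms by (simp_all add: U_def V_def powr_powr sum_nonneg)
    then have "(\<Sum>x\<in>A. (u x / U) * (v x / V)) \<le> (\<Sum>x\<in>A. (u x / U) powr p / p + (v x / V) powr q / q)"
      using assms \<open>0 < U\<close> \<open>0 < V\<close> by (intro sum_mono Youngs_inequality) auto
    also have "\<dots> = 1"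
      using assms \<open>0 < U\<close> \<open>0 < V\<close>
      by (simp add: powr_divide sum.distrib powers u v flip: sum_divide_distrib)
    finally show ?thesis
      using \<open>0 < U\<close> \<open>0 < V\<close> by (simp add: U_def V_def sum_divide_distrib[symmetric] divide_le_eq)
  qed
qed

lemma c0_mem_norm_le_sup_norm:
  assumes "c0_mem x"
  shows "cmod (x i) \<le> sup_norm x"
proof -
  have "Bseq x"
    using assms by (auto simp: c0_mem_def intro: convergent_imp_Bseq convergentI)
  then have "bdd_above (range (\<lambda>i. cmod (x i)))"
    by (auto simp: Bseq_def intro: bdd_aboveI2)
  then show ?thesis
    unfolding sup_norm_def by (rule cSUP_upper[OF UNIV_I])
qed

lemma sum_mult_le_X_ball:
  assumes "1 \<le> p" "X_mem p x" "X_norm p x \<le> 1" "\<And>j. 0 \<le> u j"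
  shows "(\<Sum>j<K. cmod (x j) * u j) \<le> (\<Sum>j<K. u j powr p) powr (1 / p)"
proof (cases "p = 1")
  case True
  then have "cmod (x j) \<le> 1" for j
    using assms c0_mem_norm_le_sup_norm[of x j] by (simp add: X_mem_def X_norm_def)
  then have "(\<Sum>j<K. cmod (x j) * u j) \<le> (\<Sum>j<K. u j)"
    using assms(4) by (intro sum_mono) (simp add: mult_left_le_one_le)
  then show ?thesis
    using True assms(4) by simp
next
  case False
  define q where "q = conj_exp p"
  have pq: "1 < p" "1 < q" "1 / p + 1 / q = 1"
    using False assms(1) by (simp_all add: q_def conj_exp_def field_simps)
  have summable: "summable (\<lambda>i. cmod (x i) powr q)" and norm: "(\<Sum>i. cmod (x i) powr q) powr (1 / q) \<le> 1"
    using assms False by (simp_all add: X_mem_def X_norm_def q_def)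
  have "(\<Sum>j<K. cmod (x j) powr q) powr (1 / q) \<le> (\<Sum>i. cmod (x i) powr q) powr (1 / q)"
    using pq by (intro powr_mono2 sum_le_suminf[OF summable]) (auto intro: sum_nonneg)
  then have "(\<Sum>j<K. cmod (x j) powr q) powr (1 / q) \<le> 1"
    using norm by linarith
  moreover have "(\<Sum>j<K. u j * cmod (x j))
      \<le> (\<Sum>j<K. u j powr p) powr (1 / p) * (\<Sum>j<K. cmod (x j) powr q) powr (1 / q)"
    using pq assms(4) by (intro Holder_inequality_sum) auto
  ultimately show ?thesis
    by (simp add: mult.commute) (meson mult_left_le order_trans powr_ge_zero)
qed

definition grid_form ::
    "nat \<Rightarrow> nat \<Rightarrow> nat \<Rightarrow> real \<Rightarrow> (nat list \<Rightarrow> complex) \<Rightarrow> (nat \<Rightarrow> nat \<times> nat \<Rightarrow> nat)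
      \<Rightarrow> (nat \<Rightarrow> nat \<Rightarrow> complex) \<Rightarrow> complex" where
  "grid_form M m N p a e x = (\<Sum>j<card (phases M m N). x 0 j *
     (of_real (((1 / real M) ^ (N * m)) powr (1 / p)) *
      multipoly m N a (\<lambda>i. unit_root M (e j i) * x (Suc (fst i)) (snd i))))"

lemma multilinear_form_grid_form: "multilinear_form m p (grid_form M m N p a e)"
  unfolding multilinear_form_def
proof (intro allI impI)
  fix x :: "nat \<Rightarrow> nat \<Rightarrow> complex" and k :: nat and y z :: "nat \<Rightarrow> complex" and c :: complex
  assume "k \<le> m"
  show "grid_form M m N p a e (x(k := \<lambda>i. c * y i + z i))
      = c * grid_form M m N p a e (x(k := y)) + grid_form M m N p a e (x(k := z))"
  proof (cases k)
    case 0
    then show ?thesis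
      by (simp add: grid_form_def sum.distrib sum_distrib_left algebra_simps)
  next
    case (Suc k0)
    have "multipoly m N a (\<lambda>i. unit_root M (e j i) * (x(k := \<lambda>i. c * y i + z i)) (Suc (fst i)) (snd i))
        = c * multipoly m N a (\<lambda>i. unit_root M (e j i) * (x(k := y)) (Suc (fst i)) (snd i))
          + multipoly m N a (\<lambda>i. unit_root M (e j i) * (x(k := z)) (Suc (fst i)) (snd i))" for j
      using Suc \<open>k \<le> m\<close> by (intro multipoly_row_linear[of k0]) (auto simp: algebra_simps)
    then show ?thesis
      using Suc by (simp add: grid_form_def sum.distrib sum_distrib_left algebra_simps)
  qed
qed

lemma multipoly_unitvec:
  assumes "length is = m"
  shows "multipoly m N a (\<lambda>i. c i * unitvec (is ! fst i) (snd i))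
    = (if is \<in> idx m N then a is * (\<Prod>k<m. c (k, is ! k)) else 0)"
proof -
  have "(\<Prod>k<m. c (k, ns ! k) * unitvec (is ! k) (ns ! k)) = 0"
    if ns: "ns \<in> idx m N" "ns \<noteq> is" for ns
  proof -
    obtain k where "k < m" "ns ! k \<noteq> is ! k"
      using ns assms nth_equalityI[of ns "is"] by (auto simp: idx_def)
    then show ?thesis
      by (auto simp: unitvec_def intro: prod_zero)
  qed
  then have "multipoly m N a (\<lambda>i. c i * unitvec (is ! fst i) (snd i))
      = (\<Sum>ns\<in>idx m N. if ns = is then a is * (\<Prod>k<m. c (k, is ! k)) else 0)"
    unfolding multipoly_def by (intro sum.cong) (auto simp: unitvec_def)
  then show ?thesis
    by simp
qed

lemma coef_grid_form:
  assumes "length is = m"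
  shows "coef m (grid_form M m N p a e) j is =
    (if j < card (phases M m N) \<and> is \<in> idx m N
     then of_real (((1 / real M) ^ (N * m)) powr (1 / p)) * a is * (\<Prod>k<m. unit_root M (e j (k, is ! k)))
     else 0)"
proof -
  have "coef m (grid_form M m N p a e) j is = (\<Sum>j'<card (phases M m N). unitvec j j' *
     (of_real (((1 / real M) ^ (N * m)) powr (1 / p)) *
      multipoly m N a (\<lambda>i. unit_root M (e j' i) * unitvec (is ! fst i) (snd i))))"
    unfolding coef_def grid_form_def
    by (intro sum.cong refl arg_cong2[where f = "(*)"] multipoly_cong) simp_all
  also have "\<dots> = (if j < card (phases M m N)
      then of_real (((1 / real M) ^ (N * m)) powr (1 / p))
        * multipoly m N a (\<lambda>i. unit_root M (e j i) * unitvec (is ! fst i) (snd i)) else 0)"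
    by (simp add: unitvec_def if_distrib[of "\<lambda>u. u * _"] cong: if_cong)
  finally show ?thesis
    by (simp add: multipoly_unitvec[OF assms])
qed

lemma sum_coef_grid_form_powr:
  assumes "2 \<le> M" "1 \<le> p" "length is = m"
  shows "(\<Sum>\<^sub>\<infinity>j. cmod (coef m (grid_form M m N p a e) j is) powr p)
    = (if is \<in> idx m N then cmod (a is) powr p else 0)"
proof -
  define K where "K = card (phases M m N)"
  define w where "w = (1 / real M) ^ (N * m)"
  have K: "real K * w = 1"
    using assms(1) by (simp add: K_def w_def card_phases power_one_over)
  define f where "f j = (if j < K \<and> is \<in> idx m N then w * cmod (a is) powr p else 0)" for j
  have "cmod (coef m (grid_form M m N p a e) j is) powr p = f j" for j
    using assms(2) by (simp add: coef_grid_form[OF assms(3)] f_def K_def w_def norm_mult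
        prod_norm[symmetric] powr_mult powr_powr)
  then have "(\<Sum>\<^sub>\<infinity>j. cmod (coef m (grid_form M m N p a e) j is) powr p) = infsum f UNIV"
    by simp
  also have "\<dots> = infsum f {..<K}"
    by (rule infsum_cong_neutral) (auto simp: f_def)
  also have "\<dots> = (if is \<in> idx m N then cmod (a is) powr p else 0)"
    using K by (simp add: f_def mult.assoc[symmetric])
  finally show ?thesis .
qed

lemma mixed_norm_coef_grid_form:
  assumes "2 \<le> M" "1 \<le> p"
  shows "sqrt (\<Sum>\<^sub>\<infinity>is\<in>{is. length is = m}.
      (\<Sum>\<^sub>\<infinity>j. cmod (coef m (grid_form M m N p a e) j is) powr p) powr (2 / p))
    = l2norm_arr m N a"
proof -
  have "(\<Sum>\<^sub>\<infinity>is\<in>{is. length is = m}.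
      (\<Sum>\<^sub>\<infinity>j. cmod (coef m (grid_form M m N p a e) j is) powr p) powr (2 / p))
      = (\<Sum>\<^sub>\<infinity>is\<in>{is. length is = m}. if is \<in> idx m N then (cmod (a is))\<^sup>2 else 0)"
    using assms by (intro infsum_cong) (simp add: sum_coef_grid_form_powr powr_powr)
  also have "\<dots> = (\<Sum>\<^sub>\<infinity>is\<in>idx m N. (cmod (a is))\<^sup>2)"
    by (rule infsum_cong_neutral) (auto simp: idx_def)
  finally show ?thesis
    by (simp add: l2norm_arr_def)
qed

lemma norm_grid_form_le:
  assumes "3 \<le> M" "1 \<le> p" "bij_betw e {..<card (phases M m N)} (phases M m N)" "in_ball m p x"
  shows "cmod (grid_form M m N p a e x) \<le> r_M M powr - real m * E_MMp m M p N a"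
proof -
  define w where "w = (1 / real M) ^ (N * m)"
  define R where "R = r_M M powr - real m"
  define y where "y i = x (Suc (fst i)) (snd i)" for i
  define P where "P t = cmod (multipoly m N a (\<lambda>i. unit_root M (t i) * y i))" for t
  define B where "B = (\<Sum>t\<in>phases M m N. cmod (multipoly m N a (unit_root M \<circ> t)) powr p)"
  have y: "cmod (y (k, n)) \<le> 1" if "k < m" "n < N" for k n
  proof -
    have "c0_mem (x (Suc k))" "sup_norm (x (Suc k)) \<le> 1"
      using that assms(4) by (auto simp: in_ball_def in_dom_def)
    then show ?thesis
      using c0_mem_norm_le_sup_norm[of "x (Suc k)" n] by (simp add: y_def)
  qed
  have "cmod (grid_form M m N p a e x) \<le> (\<Sum>j<card (phases M m N). cmod (x 0 j) * (w powr (1 / p) * P (e j)))"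
    unfolding grid_form_def by (rule order_trans[OF norm_sum]) (simp add: norm_mult P_def y_def w_def)
  also have "\<dots> \<le> (\<Sum>j<card (phases M m N). (w powr (1 / p) * P (e j)) powr p) powr (1 / p)"
    using assms(2,4) by (intro sum_mult_le_X_ball) (auto simp: in_ball_def in_dom_def P_def)
  also have "\<dots> = (w * (\<Sum>t\<in>phases M m N. P t powr p)) powr (1 / p)"
    using assms(2) sum.reindex_bij_betw[OF assms(3), of "\<lambda>t. P t powr p"]
    by (simp add: powr_mult powr_powr w_def P_def flip: sum_distrib_left)
  also have "\<dots> \<le> (w * (R powr p * B)) powr (1 / p)"
    using sum_multipoly_powr_le[where y = y and a = a, OF assms(1,2) y] assms(2)
    by (intro powr_mono2 mult_left_mono) (simp_all add: P_def R_def B_def w_def sum_nonneg)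
  also have "\<dots> = R * E_MMp m M p N a"
    using assms(2) by (simp add: E_MMp_multipoly R_def B_def w_def powr_mult powr_powr)
  finally show ?thesis
    by (simp add: R_def)
qed

lemma E_MMp_eq_0_if_l2norm_arr_eq_0:
  assumes "l2norm_arr m N a = 0"
  shows "E_MMp m M p N a = 0"
proof -
  have "\<forall>ns\<in>idx m N. a ns = 0"
    using assms by (simp add: l2norm_arr_def sum_nonneg_eq_0_iff)
  then show ?thesis
    by (simp add: E_MMp_multipoly multipoly_def)
qed

lemma in_ball_zero: "in_ball m p (\<lambda>k i. 0)"
  by (simp add: in_ball_def in_dom_def X_mem_def X_norm_def sup_norm_def c0_mem_def)

lemma form_norm_grid_form:
  assumes "3 \<le> M" "1 \<le> p" "bij_betw e {..<card (phases M m N)} (phases M m N)"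
  shows "bounded_form m p (grid_form M m N p a e)"
    and "0 \<le> form_norm m p (grid_form M m N p a e)"
    and "form_norm m p (grid_form M m N p a e) \<le> r_M M powr - real m * E_MMp m M p N a"
proof -
  define S where "S = {cmod (grid_form M m N p a e x) | x. in_ball m p x}"
  have bound: "s \<le> r_M M powr - real m * E_MMp m M p N a" if "s \<in> S" for s
    using that norm_grid_form_le[OF assms] by (auto simp: S_def)
  have zero: "cmod (grid_form M m N p a e (\<lambda>k i. 0)) \<in> S"
    using in_ball_zero by (auto simp: S_def)
  have bdd: "bdd_above S"
    using bound by (rule bdd_aboveI)
  then show "bounded_form m p (grid_form M m N p a e)"
    by (simp add: bounded_form_def S_def)
  have "0 \<le> Sup S"
    using cSup_upper[OF zero bdd] by (meson norm_ge_zero order_trans)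
  moreover have "Sup S \<le> r_M M powr - real m * E_MMp m M p N a"
    using zero bound by (intro cSup_least) auto
  ultimately show "0 \<le> form_norm m p (grid_form M m N p a e)"
    and "form_norm m p (grid_form M m N p a e) \<le> r_M M powr - real m * E_MMp m M p N a"
    by (simp_all add: form_norm_def S_def)
qed

lemma C_admissible_imp_bound:
  assumes "3 \<le> M" "1 \<le> p" "C_admissible m p c"
  shows "l2norm_arr m N a \<le> (c * r_M M powr - real m) * E_MMp m M p N a"
proof -
  obtain e where e: "bij_betw e {..<card (phases M m N)} (phases M m N)"
    using ex_bij_betw_nat_finite[OF finite_phases] unfolding lessThan_atLeast0 by blast
  note norm = form_norm_grid_form[OF assms(1,2) e, of a]
  have main: "l2norm_arr m N a \<le> c * form_norm m p (grid_form M m N p a e)"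
    using assms multilinear_form_grid_form mixed_norm_coef_grid_form[of M p m N a e] norm(1)
    unfolding C_admissible_def by fastforce
  show ?thesis
  proof (cases "l2norm_arr m N a = 0")
    case True
    then show ?thesis
      by (simp add: E_MMp_eq_0_if_l2norm_arr_eq_0)
  next
    case False
    then have "0 < c"
      using main norm(2) l2norm_arr_nonneg[of m N a] by (smt (verit) mult_nonpos_nonneg)
    then show ?thesis
      using main norm(3) by (smt (verit) mult.assoc mult_left_mono)
  qed
qed

theorem mainTheorem7:
  fixes p :: real and m M :: nat
  assumes "1 \<le> p" and "p \<le> 2" and "1 \<le> m" and "2 \<le> M"
  shows "(\<exists>S\<ge>1. \<forall>N (a :: nat list \<Rightarrow> complex). l2norm_arr m N a \<le> S * E_MMp m M p N a)
       \<and> (3 \<le> M \<longrightarrow> (\<forall>c. C_admissible m p c \<longrightarrow>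
            (\<forall>N (a :: nat list \<Rightarrow> complex). l2norm_arr m N a \<le> (c * r_M M powr (- real m)) * E_MMp m M p N a)))"
proof (intro conjI impI allI)
  show "\<exists>S\<ge>1. \<forall>N (a :: nat list \<Rightarrow> complex). l2norm_arr m N a \<le> S * E_MMp m M p N a"
    using l2norm_arr_le_E_MMp[OF assms(1,4)] by (intro exI[of _ "2 ^ m"]) simp
next
  fix c N and a :: "nat list \<Rightarrow> complex"
  assume "3 \<le> M" "C_admissible m p c"
  then show "l2norm_arr m N a \<le> (c * r_M M powr (- real m)) * E_MMp m M p N a"
    using C_admissible_imp_bound assms(1) by simp
qed

end
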